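(* Let $\mathcal{G}=(\mathcal{V}_A\cup\mathcal{V}_T,\mathcal{E},w)$ be a weighted bipartite graph with $|\mathcal{V}_A|\le|\mathcal{V}_T|$ that has at least one maximum matching (in the sense defined in the context). Let $e^*\in A(\mathcal{G})$ be a bottleneck edge of $\mathcal{G}$. Let $\mathcal{G}^-$ be the graph obtained from $\mathcal{G}$ by deleting both endpoints of $e^*$ together with all edges incident to them, and let $\mathcal{G}^+$ be the graph obtained from $\mathcal{G}$ by deleting only the edge $e^*$. Let $e^-\in A(\mathcal{G}^-)$ be a bottleneck edge of $\mathcal{G}^-$. Then $w_{e^-}\le w_{e^*}$. Moreover, if $\mathcal{G}^+$ has a bottleneck edge $e^+\in A(\mathcal{G}^+)$, then $w_{e^*}\le w_{e^+}$.
   Context: A weighted bipartite graph $\mathcal{G}=(\mathcal{V}_A\cup\mathcal{V}_T,\mathcal{E},w)$ has disjoint vertex sets $\mathcal{V}_A$ (agents) and $\mathcal{V}_T$ (tasks), edge set $\mathcal{E}\subseteq\mathcal{V}_A\times\mathcal{V}_T$, and real edge weights $w_e$, $e\in\mathcal{E}$. A matching is a set of pairwise non-adjacent edges (no two share a vertex). A maximum matching of such a graph is a matching in which every vertex of the agent side $\mathcal{V}_A$ is covered. For a graph $H$ having at least one maximum matching, its bottleneck value is $b(H)=\min_M \max_{e\in M} w_e$, the minimum over maximum matchings $M$ of $H$; a bottleneck edge of $H$ is an edge $e$ with $w_e=b(H)$ that belongs to some maximum matching $M$ of $H$ with $\max_{e'\in M}w_{e'}=b(H)$, and $A(H)$ denotes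 the set of bottleneck edges of $H$. (For $\mathcal{G}^-$ the agent side is $\mathcal{V}_A$ with the endpoint of $e^*$ removed; for $\mathcal{G}^+$ the vertex sets are unchanged.) *)

theory Defs
  imports Complex_Main
begin

text \<open>Bipartite graph: agents of type 'a, tasks of type 'b (hence disjoint),
  edges are pairs (agent, task), weights w :: ('a \<times> 'b) \<Rightarrow> real.\<close>

definition is_matching :: "('a \<times> 'b) set \<Rightarrow> ('a \<times> 'b) set \<Rightarrow> bool" where
  "is_matching E M \<longleftrightarrow> M \<subseteq> E \<and>
     (\<forall>e\<in>M. \<forall>e'\<in>M. e \<noteq> e' \<longrightarrow> fst e \<noteq> fst e' \<and> snd e \<noteq> snd e')"

definition is_max_matching :: "'a set \<Rightarrow> ('a \<times> 'b) set \<Rightarrow> ('a \<times> 'b) set \<Rightarrow> bool" where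
  "is_max_matching VA E M \<longleftrightarrow> is_matching E M \<and> (\<forall>a\<in>VA. \<exists>e\<in>M. fst e = a)"

definition bottleneck_value :: "'a set \<Rightarrow> ('a \<times> 'b) set \<Rightarrow> ('a \<times> 'b \<Rightarrow> real) \<Rightarrow> real" where
  "bottleneck_value VA E w = Min ((\<lambda>M. Max (w ` M)) ` {M. is_max_matching VA E M})"

definition bottleneck_edges :: "'a set \<Rightarrow> ('a \<times> 'b) set \<Rightarrow> ('a \<times> 'b \<Rightarrow> real) \<Rightarrow> ('a \<times> 'b) set" where
  "bottleneck_edges VA E w = {e. w e = bottleneck_value VA E w \<and>
     (\<exists>M. is_max_matching VA E M \<and> e \<in> M \<and> Max (w ` M) = bottleneck_value VA E w)}"

end

theory Submission
  imports Defs
begin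

text \<open>Deleting the endpoints of \<open>e\<^sup>*\<close> from an optimal matching through \<open>e\<^sup>*\<close> leaves a maximum
  matching of \<open>\<G>\<^sup>-\<close> whose largest weight is at most \<open>w e\<^sup>*\<close>; conversely every maximum matching
  of \<open>\<G>\<^sup>+\<close> is one of \<open>\<G>\<close>, so its largest weight is at least \<open>w e\<^sup>*\<close>.\<close>

lemma finite_max_matchings:
  assumes "finite E"
  shows "finite {M. is_max_matching VA E M}"
proof -
  have "{M. is_max_matching VA E M} \<subseteq> Pow E"
    by (auto simp: is_max_matching_def is_matching_def)
  then show ?thesis
    using assms finite_subset by blast
qed

lemma bottleneck_value_le:
  assumes "finite E" and "is_max_matching VA E M"
  shows "bottleneck_value VA E w \<le> Max (w ` M)"
  unfolding bottleneck_value_def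
  using assms finite_max_matchings by (intro Min_le) auto

lemma bottleneck_edgesE:
  assumes "e \<in> bottleneck_edges VA E w"
  obtains M where "is_max_matching VA E M" and "e \<in> M"
    and "w e = Max (w ` M)" and "w e = bottleneck_value VA E w"
  using assms unfolding bottleneck_edges_def by auto

lemma bottleneck_edge_weight_le:
  assumes "finite E" and "e \<in> bottleneck_edges VA E w" and "is_max_matching VA E M"
  shows "w e \<le> Max (w ` M)"
  using assms bottleneck_value_le by (metis bottleneck_edgesE)

lemma is_max_matching_mono:
  assumes "is_max_matching VA E M" and "E \<subseteq> E'"
  shows "is_max_matching VA E' M"
  using assms unfolding is_max_matching_def is_matching_def by blast

lemma is_max_matching_Diff_endpoints:
  assumes "is_max_matching VA E M" and "e \<in> M"
  shows "is_max_matching (VA - {fst e}) {e'\<in>E. fst e' \<noteq> fst e \<and> snd e' \<noteq> snd e} (M - {e})"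
proof -
  have "M \<subseteq> E" and disjoint: "\<forall>e\<in>M. \<forall>e'\<in>M. e \<noteq> e' \<longrightarrow> fst e \<noteq> fst e' \<and> snd e \<noteq> snd e'"
    and covers: "\<forall>a\<in>VA. \<exists>e\<in>M. fst e = a"
    using assms(1) unfolding is_max_matching_def is_matching_def by auto
  have "M - {e} \<subseteq> {e'\<in>E. fst e' \<noteq> fst e \<and> snd e' \<noteq> snd e}"
    using \<open>M \<subseteq> E\<close> disjoint assms(2) by blast
  moreover have "\<forall>a\<in>VA - {fst e}. \<exists>e'\<in>M - {e}. fst e' = a"
    using covers by fastforce
  ultimately show ?thesis
    unfolding is_max_matching_def is_matching_def using disjoint by blast
qed

lemma bottleneck_edge_weight_antimono:
  assumes "finite E" and "E' \<subseteq> E"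
    and "e \<in> bottleneck_edges VA E w" and "e' \<in> bottleneck_edges VA E' w"
  shows "w e \<le> w e'"
proof -
  obtain M' where M': "is_max_matching VA E' M'" "w e' = Max (w ` M')"
    using assms(4) by (rule bottleneck_edgesE)
  have "is_max_matching VA E M'"
    using M'(1) assms(2) by (rule is_max_matching_mono)
  then show ?thesis
    using bottleneck_edge_weight_le[OF assms(1,3)] M'(2) by simp
qed

lemma bottleneck_edge_weight_Diff_endpoints_le:
  assumes "finite E" and "E \<subseteq> VA \<times> VT"
    and "e \<in> bottleneck_edges VA E w"
    and "e' \<in> bottleneck_edges (VA - {fst e}) {f\<in>E. fst f \<noteq> fst e \<and> snd f \<noteq> snd e} w"
  shows "w e' \<le> w e"
proof -
  let ?E' = "{f\<in>E. fst f \<noteq> fst e \<and> snd f \<noteq> snd e}"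
  obtain M where M: "is_max_matching VA E M" "e \<in> M" "w e = Max (w ` M)"
    using assms(3) by (rule bottleneck_edgesE)
  have "finite M"
    using M(1) assms(1) finite_subset unfolding is_max_matching_def is_matching_def by blast
  have M_Diff: "is_max_matching (VA - {fst e}) ?E' (M - {e})"
    using M(1,2) by (rule is_max_matching_Diff_endpoints)
  obtain M' where "is_max_matching (VA - {fst e}) ?E' M'" "e' \<in> M'"
    using assms(4) by (rule bottleneck_edgesE)
  then have "fst e' \<in> VA - {fst e}"
    using assms(2) unfolding is_max_matching_def is_matching_def by auto
  then have "M - {e} \<noteq> {}"
    using M_Diff unfolding is_max_matching_def by blast
  have "w e' \<le> Max (w ` (M - {e}))"
    using assms(1,4) M_Diff by (intro bottleneck_edge_weight_le) auto
  also have "\<dots> \<le> w e"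
    using M(3) \<open>M - {e} \<noteq> {}\<close> \<open>finite M\<close> by (auto intro: Max_mono)
  finally show ?thesis .
qed

theorem lemma1:
  fixes VA :: "'a set" and VT :: "'b set" and E :: "('a \<times> 'b) set"
    and w :: "'a \<times> 'b \<Rightarrow> real" and estar :: "'a \<times> 'b"
  assumes "finite VA" and "finite VT" and "E \<subseteq> VA \<times> VT"
    and "card VA \<le> card VT"
    and "\<exists>M. is_max_matching VA E M"
    and "estar \<in> bottleneck_edges VA E w"
  shows "(\<forall>em \<in> bottleneck_edges (VA - {fst estar})
                 {e\<in>E. fst e \<noteq> fst estar \<and> snd e \<noteq> snd estar} w.
            w em \<le> w estar)
       \<and> (\<forall>ep \<in> bottleneck_edges VA (E - {estar}) w. w estar \<le> w ep)"
proof -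
  have "finite E"
    using assms(1-3) finite_subset by blast
  then show ?thesis
    using assms(3,6)
    by (auto intro: bottleneck_edge_weight_Diff_endpoints_le bottleneck_edge_weight_antimono)
qed

end
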